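(* Let $c>0$ and $F_c(t)=\log\big(1+2c\sinh\frac{t}{2}\big)$ for $t>0$. The function $t\mapsto F_c(t)/t$ is decreasing from $(0,\infty)$ onto $(1/2,c)$ if and only if $c\ge 1$. *)

theory Defs
  imports Complex_Main
begin

definition F :: "real \<Rightarrow> real \<Rightarrow> real" where
  "F c t = ln (1 + 2 * c * sinh (t / 2))"

end

theory Submission
  imports Defs "HOL-Real_Asymp.Real_Asymp"
begin

text \<open>
  Write \<open>g t = F c t / t\<close>. Since \<open>F c t \<sim> c t\<close> as \<open>t \<rightarrow> 0\<close> and \<open>F c t = t/2 + O(1)\<close> as
  \<open>t \<rightarrow> \<infinity>\<close>, the limits of \<open>g\<close> at the two ends are \<open>c\<close> and \<open>1/2\<close>; so a continuous
  strictly decreasing \<open>g\<close> maps \<open>(0,\<infinity>)\<close> onto \<open>(1/2,c)\<close>. In the variable \<open>x = exp (t/2)\<close> one has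
  \<open>1 + 2c sinh(t/2) = P/x\<close> with \<open>P = c x\<^sup>2 + x - c\<close>. For \<open>c \<ge> 1\<close> the sign condition
  \<open>t F' < F\<close> for \<open>g' < 0\<close> becomes an elementary inequality between \<open>ln x\<close> and \<open>ln (P/x)\<close>,
  which follows from \<open>1 - 1/y \<le> ln y \<le> y - 1\<close>. For \<open>c < 1\<close> the point \<open>x = 1/(1 - c)\<close>
  gives \<open>P < x\<^sup>2\<close>, i.e. \<open>g t < 1/2\<close>, so \<open>1/2\<close> is not a lower bound of the range.
\<close>

lemma strict_antimono_on_image_greaterThan:
  fixes g :: "real \<Rightarrow> real"
  assumes dec: "strict_antimono_on {l<..} g" and cont: "continuous_on {l<..} g"
    and lim_l: "(g \<longlongrightarrow> a) (at_right l)" and lim_top: "(g \<longlongrightarrow> b) at_top"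
  shows "g ` {l<..} = {b<..<a}"
proof
  have less: "g t < g s" if "l < s" "s < t" for s t
    using monotone_onD[OF dec, of s t] that by simp
  show "g ` {l<..} \<subseteq> {b<..<a}"
  proof
    fix y assume "y \<in> g ` {l<..}"
    then obtain t where t: "l < t" "y = g t" by auto
    have "g ((l + t) / 2) \<le> a"
    proof (rule tendsto_lowerbound[OF lim_l])
      show "\<forall>\<^sub>F s in at_right l. g ((l + t) / 2) \<le> g s"
        unfolding eventually_at_right_field
        using t less by (intro exI[of _ "(l + t) / 2"]) (auto intro: less_imp_le)
    qed simp
    moreover have "b \<le> g (t + 1)"
    proof (rule tendsto_upperbound[OF lim_top])
      show "\<forall>\<^sub>F s in at_top. g s \<le> g (t + 1)"
        unfolding eventually_at_top_linorder
        using t less by (intro exI[of _ "t + 2"]) (auto intro: less_imp_le)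
    qed simp
    moreover have "g t < g ((l + t) / 2)" "g (t + 1) < g t"
      using t less by auto
    ultimately show "y \<in> {b<..<a}" using t by auto
  qed
  show "{b<..<a} \<subseteq> g ` {l<..}"
  proof
    fix y assume y: "y \<in> {b<..<a}"
    have "\<forall>\<^sub>F s in at_right l. y < g s" using order_tendstoD(1)[OF lim_l] y by simp
    then obtain r where r: "l < r" "y < g r"
      unfolding eventually_at_right_field by (metis dense)
    have "\<forall>\<^sub>F s in at_top. g s < y" using order_tendstoD(2)[OF lim_top] y by simp
    then obtain N where N: "\<And>s. N \<le> s \<Longrightarrow> g s < y"
      unfolding eventually_at_top_linorder by blast
    define R where "R = max N r"
    have "g R < y" "r \<le> R" using N unfolding R_def by auto
    moreover have "continuous_on {r..R} g"
      using r by (auto intro: continuous_on_subset[OF cont])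
    ultimately obtain s where "r \<le> s" "g s = y"
      using IVT2'[of g R y r] r by (auto simp: less_imp_le)
    with r show "y \<in> g ` {l<..}" by force
  qed
qed

lemma one_plus_sinh_half_eq:
  fixes c t x :: real
  assumes "x = exp (t / 2)"
  shows "1 + 2 * c * sinh (t / 2) = (c * x\<^sup>2 + x - c) / x"
  using assms by (simp add: sinh_def exp_minus field_simps power2_eq_square)

lemma cosh_half_eq:
  fixes t x :: real
  assumes "x = exp (t / 2)"
  shows "cosh (t / 2) = (x\<^sup>2 + 1) / (2 * x)"
  using assms by (simp add: cosh_def exp_minus field_simps power2_eq_square)

lemma one_plus_sinh_half_pos:
  fixes c t :: real
  assumes "c \<ge> 0" "t \<ge> 0"
  shows "1 + 2 * c * sinh (t / 2) > 0"
  using assms by (simp add: add_pos_nonneg)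

lemma F_has_real_derivative:
  assumes "c \<ge> 0" "t \<ge> 0"
  shows "(F c has_real_derivative c * cosh (t / 2) / (1 + 2 * c * sinh (t / 2))) (at t)"
proof -
  have "((\<lambda>t. ln (1 + 2 * c * sinh (t / 2))) has_real_derivative
          (2 * c * (cosh (t / 2) * (1 / 2))) / (1 + 2 * c * sinh (t / 2))) (at t)"
    using one_plus_sinh_half_pos[OF assms] by (auto intro!: derivative_eq_intros)
  then show ?thesis
    unfolding F_def[abs_def] by simp
qed

lemma continuous_on_F_div:
  assumes "c \<ge> 0"
  shows "continuous_on {0<..} (\<lambda>t. F c t / t)"
proof (intro continuous_at_imp_continuous_on ballI continuous_intros)
  fix t :: real assume "t \<in> {0<..}"
  then show "isCont (F c) t" "t \<noteq> 0"
    using DERIV_isCont[OF F_has_real_derivative[OF assms]] by auto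
qed

text \<open>
  This is \<open>t F' < F\<close> in the variable \<open>x = exp (t/2)\<close>. Both sides share the term \<open>P ln x\<close>;
  what remains is \<open>(2c - x) ln x < P - x\<^sup>2 \<le> P ln (P/x\<^sup>2)\<close>, where the first step uses
  \<open>ln x \<le> x - 1\<close> and \<open>P - x\<^sup>2 - (2c - x)(x - 1) = c (x - 1)\<^sup>2\<close>.
\<close>
lemma key_ln_inequality:
  fixes c x :: real
  assumes x: "x > 1" and c: "c \<ge> 1"
  defines "P \<equiv> c * x\<^sup>2 + x - c"
  shows "c * (x\<^sup>2 + 1) * ln x < P * ln (P / x)"
proof -
  have "(c - 1) * (x\<^sup>2 - 1) \<ge> 0"
    using x c by simp
  then have P_gt: "P - x\<^sup>2 > 0"
    using x unfolding P_def by (simp add: algebra_simps)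
  then have P_pos: "P > 0"
    using zero_le_power2[of x] by linarith
  have ln_P_x2: "P - x\<^sup>2 \<le> P * ln (P / x\<^sup>2)"
  proof -
    have "ln (x\<^sup>2 / P) \<le> x\<^sup>2 / P - 1"
      using P_pos x by (intro ln_le_minus_one) simp
    moreover have "ln (x\<^sup>2 / P) = - ln (P / x\<^sup>2)"
      using P_pos x by (simp add: ln_div)
    ultimately show ?thesis
      using P_pos by (simp add: field_simps)
  qed
  have cross_term: "(2 * c - x) * ln x < P - x\<^sup>2"
  proof (cases "2 * c - x \<ge> 0")
    case True
    have "(2 * c - x) * ln x \<le> (2 * c - x) * (x - 1)"
      using True ln_le_minus_one[of x] x by (intro mult_left_mono) auto
    also have "\<dots> = P - x\<^sup>2 - c * (x - 1)\<^sup>2"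
      unfolding P_def by (simp add: power2_eq_square algebra_simps)
    also have "\<dots> < P - x\<^sup>2"
      using x c by simp
    finally show ?thesis .
  next
    case False
    then have "(2 * c - x) * ln x < 0"
      using x by (simp add: mult_neg_pos)
    then show ?thesis
      using P_gt by linarith
  qed
  have "c * (x\<^sup>2 + 1) * ln x = P * ln x + (2 * c - x) * ln x"
    unfolding P_def by (simp add: algebra_simps)
  also have "\<dots> < P * ln x + P * ln (P / x\<^sup>2)"
    using cross_term ln_P_x2 by simp
  also have "\<dots> = P * ln (P / x)"
    using P_pos x by (simp add: ln_div power2_eq_square ln_mult algebra_simps)
  finally show ?thesis .
qed

lemma F_div_has_negative_derivative:
  assumes c: "c \<ge> 1" and t: "t > 0"
  shows "\<exists>D. ((\<lambda>t. F c t / t) has_real_derivative D) (at t) \<and> D < 0"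
proof -
  define x where "x = exp (t / 2)"
  define P where "P = c * x\<^sup>2 + x - c"
  have x: "x > 1" "ln x = t / 2"
    unfolding x_def using t by auto
  have "c * 1 \<le> c * x\<^sup>2"
    using c x by (intro mult_left_mono) auto
  then have P_pos: "P > 0"
    using x unfolding P_def by linarith
  have arg: "1 + 2 * c * sinh (t / 2) = P / x"
    unfolding P_def by (rule one_plus_sinh_half_eq[OF x_def])
  have "c * cosh (t / 2) / (1 + 2 * c * sinh (t / 2)) * t = c * (x\<^sup>2 + 1) * ln x / P"
    unfolding arg cosh_half_eq[OF x_def] x(2) using x P_pos by (simp add: field_simps)
  also have "\<dots> < ln (P / x)"
    using key_ln_inequality[OF x(1) c, folded P_def] P_pos by (simp add: pos_divide_less_eq mult.commute)
  also have "\<dots> = F c t"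
    unfolding F_def arg ..
  finally have "(c * cosh (t / 2) / (1 + 2 * c * sinh (t / 2)) * t - F c t) / (t * t) < 0"
    using t by (simp add: divide_neg_pos)
  moreover have "((\<lambda>t. F c t / t) has_real_derivative
      (c * cosh (t / 2) / (1 + 2 * c * sinh (t / 2)) * t - F c t * 1) / (t * t)) (at t)"
    using c t by (intro DERIV_divide F_has_real_derivative DERIV_ident) auto
  ultimately show ?thesis by auto
qed

lemma strict_antimono_on_F_div:
  assumes "c \<ge> 1"
  shows "strict_antimono_on {0<..} (\<lambda>t. F c t / t)"
proof (rule monotone_onI)
  fix s t :: real assume "s \<in> {0<..}" "t \<in> {0<..}" "s < t"
  then show "F c t / t < F c s / s"
    using F_div_has_negative_derivative[OF assms]
    by (intro DERIV_neg_imp_decreasing[OF \<open>s < t\<close>]) auto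
qed

lemma F_div_tendsto_at_right_0:
  assumes "c > 0"
  shows "((\<lambda>t. F c t / t) \<longlongrightarrow> c) (at_right 0)"
  using assms unfolding F_def by real_asymp

lemma F_div_tendsto_at_top:
  assumes "c > 0"
  shows "((\<lambda>t. F c t / t) \<longlongrightarrow> 1 / 2) at_top"
  using assms unfolding F_def by real_asymp

lemma F_div_less_half:
  assumes "c > 0" "c < 1"
  shows "\<exists>t > 0. F c t / t < 1 / 2"
proof -
  define x where "x = 1 / (1 - c)"
  define t where "t = 2 * ln x"
  have x: "x > 1" "x * (1 - c) = 1"
    unfolding x_def using assms by (auto simp: field_simps)
  have t: "t > 0" "exp (t / 2) = x" "ln x = t / 2"
    unfolding t_def using x by auto
  have "c * x\<^sup>2 + x - c = x\<^sup>2 - x * (x * (1 - c)) + x - c"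
    by (simp add: power2_eq_square algebra_simps)
  also have "\<dots> = x\<^sup>2 - c"
    using x by simp
  finally have P: "c * x\<^sup>2 + x - c = x\<^sup>2 - c" .
  have "F c t = ln ((x\<^sup>2 - c) / x)"
    unfolding F_def one_plus_sinh_half_eq[OF t(2)[symmetric]] P ..
  also have "\<dots> < ln x"
  proof (subst ln_less_cancel_iff)
    have "1 < x\<^sup>2"
      using x by simp
    then show "0 < (x\<^sup>2 - c) / x"
      using x assms by (intro divide_pos_pos) linarith+
    show "(x\<^sup>2 - c) / x < x"
      using x assms by (simp add: field_simps power2_eq_square)
  qed (use x in auto)
  finally show ?thesis
    using t by (intro exI[of _ t]) (simp add: field_simps)
qed

theorem lemma3p4:
  fixes c :: real
  assumes "c > 0"
  shows "(strict_antimono_on {0<..} (\<lambda>t. F c t / t) \<and>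
          (\<lambda>t. F c t / t) ` {0<..} = {1/2<..<c}) \<longleftrightarrow> c \<ge> 1"
proof
  assume range: "strict_antimono_on {0<..} (\<lambda>t. F c t / t) \<and>
          (\<lambda>t. F c t / t) ` {0<..} = {1/2<..<c}"
  show "c \<ge> 1"
  proof (rule ccontr)
    assume "\<not> c \<ge> 1"
    then obtain t where "t > 0" "F c t / t < 1 / 2"
      using F_div_less_half[OF assms] by force
    with range have "F c t / t \<in> {1/2<..<c}"
      by blast
    with \<open>F c t / t < 1 / 2\<close> show False
      by simp
  qed
next
  assume "c \<ge> 1"
  then have "strict_antimono_on {0<..} (\<lambda>t. F c t / t)"
    by (rule strict_antimono_on_F_div)
  moreover from this have "(\<lambda>t. F c t / t) ` {0<..} = {1/2<..<c}"
    using assms by (intro strict_antimono_on_image_greaterThan continuous_on_F_div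
        F_div_tendsto_at_right_0 F_div_tendsto_at_top) auto
  ultimately show "strict_antimono_on {0<..} (\<lambda>t. F c t / t) \<and>
          (\<lambda>t. F c t / t) ` {0<..} = {1/2<..<c}" ..
qed

end
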